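(* Let $a\in A\subseteq\mathbf{R}^n$, $C\in\mathbf{R}$, and let $f:\mathbf{R}^n\to\mathcal{P}(\mathbf{R}^n)$ be a multivalued map such that $\Theta^n(\mathscr{L}^n\llcorner(\mathbf{R}^n\setminus A),a)=0$, $f(b)$ is a singleton for every $b\in A$, $f|A$ is differentiable at $a$, and $$|f(b)-y|\le C|b-c|\quad\text{whenever }b\in A,\ c\in\mathbf{R}^n,\ y\in f(c).$$ Then $f$ is strongly differentiable at $a$.
   Context: $\mathcal{P}(\mathbf{R}^n)$ is the power set. $\Theta^n(\mu,x)=\lim_{r\downarrow0}\mu(\mathbf{B}(x,r))/(\alpha(n)r^n)$ (Euclidean closed balls). For a multivalued $T$ and a set $A$, $T|A$ is the multivalued map equal to $T$ on $A$ and to $\varnothing$ off $A$; a singleton value is identified with its element. A multivalued map $T$ from $\mathbf{R}^n$ to $\mathbf{R}^m$ is differentiable at $a$ if $T(a)$ is a singleton and there exists a linear $L$ such that for every $\varepsilon>0$ there is $\delta>0$ with $|y-T(a)-L(x-a)|\le\varepsilon|x-a|$ whenever $|x-a|\le\delta$ and $y\in T(x)$; it is strongly differentiable at $a$ if it is differentiable at $a$ and such $L$ is unique. *)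

theory Defs
  imports "HOL-Analysis.Analysis"
begin

text \<open>Lebesgue outer measure (the paper's L^n is defined on all sets).\<close>
definition lebesgue_outer :: "'a::euclidean_space set \<Rightarrow> ennreal" where
  "lebesgue_outer E = (INF U \<in> {U \<in> sets lebesgue. E \<subseteq> U}. emeasure lebesgue U)"

definition density_restr_zero :: "'a::euclidean_space set \<Rightarrow> 'a \<Rightarrow> bool" where
  "density_restr_zero B x \<longleftrightarrow>
     ((\<lambda>r. enn2real (lebesgue_outer (cball x r \<inter> B)) /
            (unit_ball_vol (real DIM('a)) * r ^ DIM('a))) \<longlongrightarrow> 0) (at_right 0)"

definition mv_restrict :: "('a \<Rightarrow> 'b set) \<Rightarrow> 'a set \<Rightarrow> 'a \<Rightarrow> 'b set" where
  "mv_restrict T A = (\<lambda>x. if x \<in> A then T x else {})"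

definition mv_diff_with ::
  "('a::real_normed_vector \<Rightarrow> 'b::real_normed_vector set) \<Rightarrow> 'a \<Rightarrow> ('a \<Rightarrow> 'b) \<Rightarrow> bool" where
  "mv_diff_with T a L \<longleftrightarrow> (\<exists>v. T a = {v}) \<and> linear L \<and>
     (\<forall>\<epsilon>>0. \<exists>\<delta>>0. \<forall>x y. norm (x - a) \<le> \<delta> \<and> y \<in> T x \<longrightarrow>
        norm (y - the_elem (T a) - L (x - a)) \<le> \<epsilon> * norm (x - a))"

definition mv_differentiable ::
  "('a::real_normed_vector \<Rightarrow> 'b::real_normed_vector set) \<Rightarrow> 'a \<Rightarrow> bool" where
  "mv_differentiable T a \<longleftrightarrow> (\<exists>L. mv_diff_with T a L)"

definition mv_strongly_differentiable ::
  "('a::real_normed_vector \<Rightarrow> 'b::real_normed_vector set) \<Rightarrow> 'a \<Rightarrow> bool" where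
  "mv_strongly_differentiable T a \<longleftrightarrow> mv_differentiable T a \<and>
     (\<forall>L1 L2. mv_diff_with T a L1 \<and> mv_diff_with T a L2 \<longrightarrow> L1 = L2)"

end

theory Submission
  imports Defs
begin

(* Zero density of the complement of A at a forces every point x near a to lie within
   o(|x - a|) of A: otherwise a ball of radius comparable to |x - a| that misses A would
   fill a fixed fraction of cball a (2 |x - a|). Moving x to such a nearby b in A, the
   Lipschitz-type hypothesis transfers the first-order expansion of f|A at a to f itself.
   Two linear maps that both approximate f at a agree up to o(|b - a|) on the vectors
   b - a with b in A, and these vectors approximate every vector, so the maps coincide. *)

lemma lebesgue_outer_mono:
  assumes "E \<subseteq> F"
  shows "lebesgue_outer E \<le> lebesgue_outer F"
  unfolding lebesgue_outer_def using assms by (intro INF_superset_mono) auto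

lemma lebesgue_outer_eq_emeasure:
  assumes "S \<in> sets lebesgue"
  shows "lebesgue_outer S = emeasure lebesgue S"
  unfolding lebesgue_outer_def
  using assms by (intro antisym INF_lower INF_greatest emeasure_mono) auto

lemma lebesgue_outer_ball:
  fixes x :: "'a::euclidean_space"
  assumes "0 \<le> s"
  shows "lebesgue_outer (ball x s) = ennreal (unit_ball_vol (real DIM('a)) * s ^ DIM('a))"
  using emeasure_ball[OF assms]
  by (simp add: lebesgue_outer_eq_emeasure)

lemma lebesgue_outer_cball:
  fixes x :: "'a::euclidean_space"
  assumes "0 \<le> s"
  shows "lebesgue_outer (cball x s) = ennreal (unit_ball_vol (real DIM('a)) * s ^ DIM('a))"
  using emeasure_cball[OF assms]
  by (simp add: lebesgue_outer_eq_emeasure)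

lemma lebesgue_outer_ratio_ge_if_ball_subset:
  fixes x a :: "'a::euclidean_space"
  assumes "ball x s \<subseteq> E" "E \<subseteq> cball a R" "0 \<le> s" "0 < R"
  shows "(s / R) ^ DIM('a) \<le>
           enn2real (lebesgue_outer E) / (unit_ball_vol (real DIM('a)) * R ^ DIM('a))"
proof -
  let ?V = "unit_ball_vol (real DIM('a))"
  have "lebesgue_outer E \<le> ennreal (?V * R ^ DIM('a))"
    using lebesgue_outer_mono[OF assms(2)] assms(4) by (simp add: lebesgue_outer_cball)
  then have "enn2real (lebesgue_outer (ball x s)) \<le> enn2real (lebesgue_outer E)"
    using lebesgue_outer_mono[OF assms(1)] by (intro enn2real_mono) (auto simp: le_less_trans)
  then have "?V * s ^ DIM('a) \<le> enn2real (lebesgue_outer E)"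
    using assms(3) by (simp add: lebesgue_outer_ball)
  then have "?V * s ^ DIM('a) / (?V * R ^ DIM('a)) \<le> enn2real (lebesgue_outer E) / (?V * R ^ DIM('a))"
    by (rule divide_right_mono) (use assms(4) in simp)
  moreover have "?V > 0" by simp
  ultimately show ?thesis
    using assms(4) by (simp add: power_divide)
qed

lemma ball_subset_cball_diff:
  fixes x a :: "'a::real_normed_vector"
  assumes "ball x s \<inter> A = {}" "s \<le> norm (x - a)"
  shows "ball x s \<subseteq> cball a (2 * norm (x - a)) \<inter> (UNIV - A)"
proof
  fix z assume "z \<in> ball x s"
  then have "norm (z - x) < s" by (simp add: dist_norm norm_minus_commute)
  then have "norm (z - a) \<le> 2 * norm (x - a)"
    using norm_triangle_ineq[of "z - x" "x - a"] assms(2) by simp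
  then show "z \<in> cball a (2 * norm (x - a)) \<inter> (UNIV - A)"
    using assms(1) \<open>z \<in> ball x s\<close> by (auto simp: dist_norm norm_minus_commute)
qed

definition asymp_dense_at :: "'a::real_normed_vector set \<Rightarrow> 'a \<Rightarrow> bool" where
  "asymp_dense_at A a \<longleftrightarrow>
     (\<forall>\<epsilon>>0. \<exists>\<delta>>0. \<forall>x. norm (x - a) \<le> \<delta> \<longrightarrow> (\<exists>b\<in>A. norm (b - x) \<le> \<epsilon> * norm (x - a)))"

lemma asymp_dense_at_if_density_complement_zero:
  fixes A :: "'a::euclidean_space set"
  assumes "a \<in> A" and "density_restr_zero (UNIV - A) a"
  shows "asymp_dense_at A a"
  unfolding asymp_dense_at_def
proof (intro allI impI)
  fix \<epsilon> :: real assume "\<epsilon> > 0"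
  define e where "e = min \<epsilon> 1"
  have e: "0 < e" "e \<le> 1" "e \<le> \<epsilon>" using \<open>\<epsilon> > 0\<close> by (auto simp: e_def)
  let ?ratio = "\<lambda>r. enn2real (lebesgue_outer (cball a r \<inter> (UNIV - A))) /
                    (unit_ball_vol (real DIM('a)) * r ^ DIM('a))"
  have "\<forall>\<^sub>F r in at_right 0. ?ratio r < (e / 2) ^ DIM('a)"
    using assms(2) e(1) unfolding density_restr_zero_def by (intro order_tendstoD(2)) auto
  then obtain d where d: "d > 0" "\<And>r. 0 < r \<Longrightarrow> r < d \<Longrightarrow> ?ratio r < (e / 2) ^ DIM('a)"
    unfolding eventually_at_right_field by auto
  show "\<exists>\<delta>>0. \<forall>x. norm (x - a) \<le> \<delta> \<longrightarrow> (\<exists>b\<in>A. norm (b - x) \<le> \<epsilon> * norm (x - a))"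
  proof (intro exI[of _ "d / 3"] conjI allI impI)
    fix x assume x: "norm (x - a) \<le> d / 3"
    define r where "r = norm (x - a)"
    show "\<exists>b\<in>A. norm (b - x) \<le> \<epsilon> * norm (x - a)"
    proof (cases "r = 0")
      case True
      then show ?thesis using assms(1) by (auto simp: r_def)
    next
      case False
      then have "r > 0" by (simp add: r_def)
      show ?thesis
      proof (rule ccontr)
        assume no_b: "\<not> ?thesis"
        have "e * r \<le> \<epsilon> * r" "e * r \<le> r" using e \<open>r > 0\<close> by simp_all
        then have "ball x (e * r) \<inter> A = {}"
          using no_b by (force simp: r_def dist_norm norm_minus_commute)
        then have "ball x (e * r) \<subseteq> cball a (2 * r) \<inter> (UNIV - A)"
          using ball_subset_cball_diff \<open>e * r \<le> r\<close> unfolding r_def by blast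
        then have "(e * r / (2 * r)) ^ DIM('a) \<le> ?ratio (2 * r)"
          using e(1) \<open>r > 0\<close> by (intro lebesgue_outer_ratio_ge_if_ball_subset) auto
        moreover have "2 * r < d" using x \<open>r > 0\<close> r_def by linarith
        then have "?ratio (2 * r) < (e / 2) ^ DIM('a)" using \<open>r > 0\<close> by (intro d(2)) auto
        ultimately show False
          using \<open>r > 0\<close> by simp
      qed
    qed
  qed (use d in simp)
qed

lemma asymp_dense_atE:
  assumes "asymp_dense_at A a" "\<epsilon> > 0"
  obtains \<delta> where "\<delta> > 0"
    "\<And>x. norm (x - a) \<le> \<delta> \<Longrightarrow>
       \<exists>b\<in>A. norm (b - x) \<le> \<epsilon> * norm (x - a) \<and> norm (b - a) \<le> (1 + \<epsilon>) * norm (x - a)"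
proof -
  obtain \<delta> where "\<delta> > 0" and \<delta>: "\<And>x. norm (x - a) \<le> \<delta> \<Longrightarrow> \<exists>b\<in>A. norm (b - x) \<le> \<epsilon> * norm (x - a)"
    using assms unfolding asymp_dense_at_def by meson
  moreover have "norm (b - a) \<le> (1 + \<epsilon>) * norm (x - a)" if "norm (b - x) \<le> \<epsilon> * norm (x - a)" for b x
    using norm_triangle_ineq[of "b - x" "x - a"] that by (simp add: algebra_simps)
  ultimately show ?thesis using that by meson
qed

lemma mv_diff_withE:
  assumes "mv_diff_with T a L" "\<epsilon> > 0"
  obtains \<delta> where "\<delta> > 0"
    "\<And>x y. norm (x - a) \<le> \<delta> \<Longrightarrow> y \<in> T x \<Longrightarrow>
       norm (y - the_elem (T a) - L (x - a)) \<le> \<epsilon> * norm (x - a)"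
  using assms unfolding mv_diff_with_def by meson

lemma norm_linear_le_if_small_on_asymp_dense:
  fixes D :: "'a::real_normed_vector \<Rightarrow> 'b::real_normed_vector"
  assumes dense: "asymp_dense_at A a" and "linear D"
    and "K \<ge> 0" and K: "\<And>x. norm (D x) \<le> K * norm x"
    and small: "\<exists>\<delta>>0. \<forall>b\<in>A. norm (b - a) \<le> \<delta> \<longrightarrow> norm (D (b - a)) \<le> \<epsilon> * norm (b - a)"
    and "\<epsilon> > 0"
  shows "norm (D u) \<le> \<epsilon> * (1 + \<epsilon> + K) * norm u"
proof (cases "u = 0")
  case True
  then show ?thesis using linear_0[OF \<open>linear D\<close>] by simp
next
  case False
  obtain \<delta>1 where "\<delta>1 > 0" and \<delta>1: "\<forall>b\<in>A. norm (b - a) \<le> \<delta>1 \<longrightarrow> norm (D (b - a)) \<le> \<epsilon> * norm (b - a)"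
    using small by blast
  obtain \<delta>2 where "\<delta>2 > 0" and \<delta>2: "\<And>x. norm (x - a) \<le> \<delta>2 \<Longrightarrow>
     \<exists>b\<in>A. norm (b - x) \<le> \<epsilon> * norm (x - a) \<and> norm (b - a) \<le> (1 + \<epsilon>) * norm (x - a)"
    using asymp_dense_atE[OF dense \<open>\<epsilon> > 0\<close>] by blast
  define s where "s = min \<delta>1 \<delta>2 / (1 + \<epsilon>)"
  have "s > 0" using \<open>\<delta>1 > 0\<close> \<open>\<delta>2 > 0\<close> \<open>\<epsilon> > 0\<close> by (simp add: s_def)
  have "(1 + \<epsilon>) * s = min \<delta>1 \<delta>2" using \<open>\<epsilon> > 0\<close> by (simp add: s_def)
  moreover have "s \<le> (1 + \<epsilon>) * s" using \<open>s > 0\<close> \<open>\<epsilon> > 0\<close> by simp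
  ultimately have "s \<le> \<delta>2" "(1 + \<epsilon>) * s \<le> \<delta>1" by linarith+
  define x where "x = a + (s / norm u) *\<^sub>R u"
  have "norm (x - a) = s" using \<open>s > 0\<close> False by (simp add: x_def)
  then obtain b where "b \<in> A" and b: "norm (b - x) \<le> \<epsilon> * s" "norm (b - a) \<le> (1 + \<epsilon>) * s"
    using \<delta>2 \<open>s \<le> \<delta>2\<close> by fastforce
  have "norm (D (b - a)) \<le> \<epsilon> * ((1 + \<epsilon>) * s)"
    using \<delta>1 \<open>b \<in> A\<close> b(2) \<open>(1 + \<epsilon>) * s \<le> \<delta>1\<close> \<open>\<epsilon> > 0\<close>
    by (meson order_trans mult_left_mono less_imp_le)
  moreover have "norm (D (b - x)) \<le> K * (\<epsilon> * s)"
    using K[of "b - x"] b(1) \<open>K \<ge> 0\<close> by (meson order_trans mult_left_mono)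
  moreover have "norm (D (x - a)) = norm (D (b - a) - D (b - x))"
    using linear_diff[OF \<open>linear D\<close>, of "b - a" "b - x"] by simp
  moreover note norm_triangle_ineq4[of "D (b - a)" "D (b - x)"]
  ultimately have "norm (D (x - a)) \<le> \<epsilon> * ((1 + \<epsilon>) * s) + K * (\<epsilon> * s)"
    by linarith
  also have "\<dots> = s * (\<epsilon> * (1 + \<epsilon> + K))" by (simp add: algebra_simps)
  finally have "norm (D (x - a)) \<le> s * (\<epsilon> * (1 + \<epsilon> + K))" .
  moreover have "D (x - a) = (s / norm u) *\<^sub>R D u"
    by (simp add: x_def linear_scale[OF \<open>linear D\<close>])
  ultimately have "s * (norm (D u) / norm u) \<le> s * (\<epsilon> * (1 + \<epsilon> + K))"
    using \<open>s > 0\<close> by simp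
  then show ?thesis
    using \<open>s > 0\<close> False by (simp add: divide_le_eq mult.commute mult.left_commute)
qed

lemma linear_eq_0_if_small_on_asymp_dense:
  fixes D :: "'a::euclidean_space \<Rightarrow> 'b::real_normed_vector"
  assumes dense: "asymp_dense_at A a" and "linear D"
    and small: "\<And>\<epsilon>. \<epsilon> > 0 \<Longrightarrow>
       \<exists>\<delta>>0. \<forall>b\<in>A. norm (b - a) \<le> \<delta> \<longrightarrow> norm (D (b - a)) \<le> \<epsilon> * norm (b - a)"
  shows "D u = 0"
proof -
  obtain K where "K > 0" and K: "\<And>x. norm (D x) \<le> K * norm x"
    using linear_bounded_pos[OF \<open>linear D\<close>] by blast
  have "((\<lambda>\<epsilon>. \<epsilon> * (1 + \<epsilon> + K) * norm u) \<longlongrightarrow> 0) (at_right 0)"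
    by (auto intro!: tendsto_eq_intros)
  moreover have "\<forall>\<^sub>F \<epsilon> in at_right 0. norm (D u) \<le> \<epsilon> * (1 + \<epsilon> + K) * norm u"
    unfolding eventually_at_right_field
    using norm_linear_le_if_small_on_asymp_dense[OF dense \<open>linear D\<close> _ K small] \<open>K > 0\<close> by (auto intro!: exI[of _ 1])
  ultimately have "norm (D u) \<le> 0"
    by (rule tendsto_lowerbound) simp
  then show ?thesis by simp
qed

lemma mv_diff_with_unique:
  fixes T :: "'a::euclidean_space \<Rightarrow> 'b::real_normed_vector set"
  assumes dense: "asymp_dense_at A a" and nonempty: "\<forall>b\<in>A. T b \<noteq> {}"
    and L1: "mv_diff_with T a L1" and L2: "mv_diff_with T a L2"
  shows "L1 = L2"
proof
  fix u
  have "linear L1" "linear L2" using L1 L2 unfolding mv_diff_with_def by auto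
  have "(\<lambda>x. L1 x - L2 x) u = 0"
  proof (rule linear_eq_0_if_small_on_asymp_dense[OF dense])
    show "linear (\<lambda>x. L1 x - L2 x)"
      using \<open>linear L1\<close> \<open>linear L2\<close> by (rule linear_compose_sub)
    fix \<epsilon> :: real assume "\<epsilon> > 0"
    then have "\<epsilon> / 2 > 0" by simp
    let ?v = "the_elem (T a)"
    obtain \<delta>1 where "\<delta>1 > 0" and \<delta>1: "\<And>x y. norm (x - a) \<le> \<delta>1 \<Longrightarrow> y \<in> T x \<Longrightarrow>
        norm (y - ?v - L1 (x - a)) \<le> \<epsilon> / 2 * norm (x - a)"
      using mv_diff_withE[OF L1 \<open>\<epsilon> / 2 > 0\<close>] by blast
    obtain \<delta>2 where "\<delta>2 > 0" and \<delta>2: "\<And>x y. norm (x - a) \<le> \<delta>2 \<Longrightarrow> y \<in> T x \<Longrightarrow>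
        norm (y - ?v - L2 (x - a)) \<le> \<epsilon> / 2 * norm (x - a)"
      using mv_diff_withE[OF L2 \<open>\<epsilon> / 2 > 0\<close>] by blast
    show "\<exists>\<delta>>0. \<forall>b\<in>A. norm (b - a) \<le> \<delta> \<longrightarrow> norm (L1 (b - a) - L2 (b - a)) \<le> \<epsilon> * norm (b - a)"
    proof (intro exI[of _ "min \<delta>1 \<delta>2"] conjI ballI impI)
      fix b assume "b \<in> A" and b: "norm (b - a) \<le> min \<delta>1 \<delta>2"
      then obtain y where y: "y \<in> T b" using nonempty by blast
      have "L1 (b - a) - L2 (b - a) = (y - ?v - L2 (b - a)) - (y - ?v - L1 (b - a))" by simp
      then have "norm (L1 (b - a) - L2 (b - a)) \<le> norm (y - ?v - L2 (b - a)) + norm (y - ?v - L1 (b - a))"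
        by (metis norm_triangle_ineq4)
      moreover have "norm (y - ?v - L1 (b - a)) \<le> \<epsilon> / 2 * norm (b - a)"
        using \<delta>1[OF _ y] b by simp
      moreover have "norm (y - ?v - L2 (b - a)) \<le> \<epsilon> / 2 * norm (b - a)"
        using \<delta>2[OF _ y] b by simp
      ultimately show "norm (L1 (b - a) - L2 (b - a)) \<le> \<epsilon> * norm (b - a)" by linarith
    qed (use \<open>\<delta>1 > 0\<close> \<open>\<delta>2 > 0\<close> in simp)
  qed
  then show "L1 u = L2 u" by simp
qed

lemma mv_diff_withI_scaled:
  assumes "T a = {v}" "linear L" "Q > 0"
    and small: "\<And>\<eta>. 0 < \<eta> \<Longrightarrow> \<eta> \<le> 1 \<Longrightarrow> \<exists>\<delta>>0. \<forall>x y. norm (x - a) \<le> \<delta> \<longrightarrow> y \<in> T x \<longrightarrow>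
       norm (y - v - L (x - a)) \<le> Q * \<eta> * norm (x - a)"
  shows "mv_diff_with T a L"
  unfolding mv_diff_with_def
proof (intro conjI allI impI)
  fix \<epsilon> :: real assume "\<epsilon> > 0"
  define \<eta> where "\<eta> = min 1 (\<epsilon> / Q)"
  have "\<eta> > 0" "\<eta> \<le> 1" "\<eta> \<le> \<epsilon> / Q" using \<open>\<epsilon> > 0\<close> \<open>Q > 0\<close> by (auto simp: \<eta>_def)
  then have "Q * \<eta> \<le> \<epsilon>" using \<open>Q > 0\<close> by (simp add: le_divide_eq mult.commute)
  obtain \<delta> where "\<delta> > 0" and \<delta>: "\<forall>x y. norm (x - a) \<le> \<delta> \<longrightarrow> y \<in> T x \<longrightarrow>
      norm (y - v - L (x - a)) \<le> Q * \<eta> * norm (x - a)"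
    using small[OF \<open>\<eta> > 0\<close> \<open>\<eta> \<le> 1\<close>] by blast
  have "norm (y - the_elem (T a) - L (x - a)) \<le> \<epsilon> * norm (x - a)"
    if "norm (x - a) \<le> \<delta> \<and> y \<in> T x" for x y
  proof -
    have "norm (y - v - L (x - a)) \<le> Q * \<eta> * norm (x - a)" using \<delta> that by blast
    also have "\<dots> \<le> \<epsilon> * norm (x - a)" using \<open>Q * \<eta> \<le> \<epsilon>\<close> by (simp add: mult_right_mono)
    finally show ?thesis using \<open>T a = {v}\<close> by simp
  qed
  then show "\<exists>\<delta>>0. \<forall>x y. norm (x - a) \<le> \<delta> \<and> y \<in> T x \<longrightarrow>
      norm (y - the_elem (T a) - L (x - a)) \<le> \<epsilon> * norm (x - a)"
    using \<open>\<delta> > 0\<close> by blast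
qed (use assms in auto)

lemma norm_expansion_error_le_nearby:
  assumes "linear L" "norm (L (b - x)) \<le> K * norm (b - x)" "norm (z - y) \<le> M * norm (b - x)"
  shows "norm (y - v - L (x - a)) \<le> norm (z - v - L (b - a)) + (M + K) * norm (b - x)"
proof -
  have "y - v - L (x - a) = (z - v - L (b - a)) - (z - y) + L (b - x)"
    using linear_diff[OF \<open>linear L\<close>, of "b - a" "b - x"] by (simp add: algebra_simps)
  then have "norm (y - v - L (x - a)) \<le> norm (z - v - L (b - a)) + norm (z - y) + norm (L (b - x))"
    by (metis norm_triangle_ineq norm_triangle_ineq4 order_trans add_right_mono)
  then show ?thesis using assms(2,3) by (simp add: algebra_simps)
qed

lemma mv_diff_with_if_restrict_asymp_dense:
  fixes f :: "'a::euclidean_space \<Rightarrow> 'b::real_normed_vector set"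
  assumes dense: "asymp_dense_at A a"
    and single: "\<forall>b\<in>A. \<exists>v. f b = {v}"
    and diff: "mv_diff_with (mv_restrict f A) a L"
    and lip: "\<forall>b\<in>A. \<forall>c y. y \<in> f c \<longrightarrow> norm (the_elem (f b) - y) \<le> C * norm (b - c)"
  shows "mv_diff_with f a L"
proof -
  obtain v where v: "mv_restrict f A a = {v}" and "linear L"
    using diff unfolding mv_diff_with_def by auto
  then have "f a = {v}" by (auto simp: mv_restrict_def split: if_splits)
  obtain K where "K > 0" and K: "\<And>x. norm (L x) \<le> K * norm x"
    using linear_bounded_pos[OF \<open>linear L\<close>] by blast
  show ?thesis
  proof (rule mv_diff_withI_scaled[of f a v L "2 + \<bar>C\<bar> + K", OF \<open>f a = {v}\<close> \<open>linear L\<close>])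
    fix \<eta> :: real assume "\<eta> > 0" "\<eta> \<le> 1"
    obtain \<delta>1 where "\<delta>1 > 0" and \<delta>1: "\<And>x y. norm (x - a) \<le> \<delta>1 \<Longrightarrow> y \<in> mv_restrict f A x \<Longrightarrow>
        norm (y - v - L (x - a)) \<le> \<eta> * norm (x - a)"
      using mv_diff_withE[OF diff \<open>\<eta> > 0\<close>] v by auto
    obtain \<delta>2 where "\<delta>2 > 0" and \<delta>2: "\<And>x. norm (x - a) \<le> \<delta>2 \<Longrightarrow>
       \<exists>b\<in>A. norm (b - x) \<le> \<eta> * norm (x - a) \<and> norm (b - a) \<le> (1 + \<eta>) * norm (x - a)"
      using asymp_dense_atE[OF dense \<open>\<eta> > 0\<close>] by blast
    show "\<exists>\<delta>>0. \<forall>x y. norm (x - a) \<le> \<delta> \<longrightarrow> y \<in> f x \<longrightarrow>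
        norm (y - v - L (x - a)) \<le> (2 + \<bar>C\<bar> + K) * \<eta> * norm (x - a)"
    proof (intro exI[of _ "min (\<delta>1 / 2) \<delta>2"] conjI allI impI)
      fix x y assume x: "norm (x - a) \<le> min (\<delta>1 / 2) \<delta>2" and "y \<in> f x"
      let ?r = "norm (x - a)"
      obtain b where "b \<in> A" and b: "norm (b - x) \<le> \<eta> * ?r" "norm (b - a) \<le> (1 + \<eta>) * ?r"
        using \<delta>2 x by auto
      obtain z where z: "f b = {z}" using single \<open>b \<in> A\<close> by blast
      have "(1 + \<eta>) * ?r \<le> 2 * ?r" using \<open>\<eta> \<le> 1\<close> by (simp add: mult_right_mono)
      then have "norm (b - a) \<le> 2 * ?r" using b(2) by linarith
      moreover have "z \<in> mv_restrict f A b" using z \<open>b \<in> A\<close> by (simp add: mv_restrict_def)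
      ultimately have "norm (z - v - L (b - a)) \<le> \<eta> * norm (b - a)"
        using \<delta>1 x by simp
      also have "\<dots> \<le> 2 * \<eta> * ?r"
        using \<open>norm (b - a) \<le> 2 * ?r\<close> \<open>\<eta> > 0\<close> by (simp add: mult_left_mono)
      finally have err_b: "norm (z - v - L (b - a)) \<le> 2 * \<eta> * ?r" .
      have "norm (z - y) \<le> \<bar>C\<bar> * norm (b - x)"
        using lip \<open>b \<in> A\<close> \<open>y \<in> f x\<close> z by (fastforce intro: order_trans abs_ge_self mult_right_mono)
      then have "norm (y - v - L (x - a)) \<le> norm (z - v - L (b - a)) + (\<bar>C\<bar> + K) * norm (b - x)"
        using K \<open>linear L\<close> by (intro norm_expansion_error_le_nearby)
      also have "\<dots> \<le> 2 * \<eta> * ?r + (\<bar>C\<bar> + K) * (\<eta> * ?r)"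
        using err_b b(1) \<open>K > 0\<close> by (intro add_mono mult_left_mono) auto
      finally show "norm (y - v - L (x - a)) \<le> (2 + \<bar>C\<bar> + K) * \<eta> * ?r"
        by (simp add: algebra_simps)
    qed (use \<open>\<delta>1 > 0\<close> \<open>\<delta>2 > 0\<close> in simp)
  qed (use \<open>K > 0\<close> in simp)
qed

theorem lemma2p38:
  fixes f :: "'a::euclidean_space \<Rightarrow> 'a set"
    and A :: "'a set" and a :: 'a and C :: real
  assumes "a \<in> A"
    and "density_restr_zero (UNIV - A) a"
    and "\<forall>b\<in>A. \<exists>v. f b = {v}"
    and "mv_differentiable (mv_restrict f A) a"
    and "\<forall>b\<in>A. \<forall>c y. y \<in> f c \<longrightarrow> norm (the_elem (f b) - y) \<le> C * norm (b - c)"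
  shows "mv_strongly_differentiable f a"
proof -
  have dense: "asymp_dense_at A a"
    using assms(1,2) by (rule asymp_dense_at_if_density_complement_zero)
  obtain L where "mv_diff_with (mv_restrict f A) a L"
    using assms(4) unfolding mv_differentiable_def by blast
  then have "mv_diff_with f a L"
    using mv_diff_with_if_restrict_asymp_dense[OF dense assms(3) _ assms(5)] by blast
  moreover have "L1 = L2" if "mv_diff_with f a L1" "mv_diff_with f a L2" for L1 L2
    using mv_diff_with_unique[OF dense _ that] assms(3) by blast
  ultimately show ?thesis
    unfolding mv_strongly_differentiable_def mv_differentiable_def by blast
qed

end
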